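(* Let $n\geq 3$, $m=2^{n-1}$, and let $G_2(n)$ be the gyrogroup of order $2^n$ defined in the context. A subset $H$ of $G_2(n)$ is a subgyrogroup of $G_2(n)$ if and only if it has one of the following forms: (1) $H=\langle 2^s\rangle$, a subgroup of $P(n)$, with $0\leq s\leq n-1$; (2) $H=\langle 2^s, m\rangle$ with $0\leq s\leq n-1$; all such $H$ are subgroups of $G_2(n)$ (i.e. subgyrogroups on which the operation is associative, all gyroautomorphisms restricting to the identity) except $H=\langle 1,m\rangle=G_2(n)$; (3) $H=\langle m+2^s\rangle$ with $0\leq s\leq n-2$, which is a subgroup of $G_2(n)$.
   Context: Setup: $n\ge 3$, $m=2^{n-1}$, $G_2(n)=\{0,1,\dots,2^n-1\}$, $P(n)=\{0,\dots,m-1\}$, $H(n)=\{m,\dots,2^n-1\}$; $O_P,E_P$ are the odd/even elements of $P(n)$, $O_H,E_H$ the odd/even elements of $H(n)$. For $i,j\in G_2(n)$ let $t,s\in P(n)$ with $t\equiv i+j\pmod m$, $s\equiv i+j+\frac m2\pmod m$, and set $i\oplus j=t$ if $(i,j)\in (P(n)\times P(n))\cup\big[(H(n)\times H(n))\setminus(E_H\times O_H)\big]$; $i\oplus j=t+m$ if $(i,j)\in (P(n)\times H(n))\cup\big[(H(n)\times P(n))\setminus(E_H\times O_P)\big]$; $i\oplus j=s$ if $(i,j)\in E_H\times O_H$; $i\oplus j=s+m$ if $(i,j)\in E_H\times O_P$. Let $A\colon G_2(n)\to G_2(n)$ be $A(i)=r$ if $i\in O_P$, $A(i)=r+m$ if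 $i\in O_H$, $A(i)=i$ otherwise, where $r\in P(n)$, $r\equiv i+\frac m2\pmod m$. Let $M=[O_P\times(O_H\cup E_H)]\cup[O_H\times(O_P\cup E_H)]\cup[E_H\times(O_P\cup O_H)]$, and $\mathrm{gyr}[a,b]=A$ if $(a,b)\in M$, $\mathrm{gyr}[a,b]=I$ (identity) otherwise. Then $(G_2(n),\oplus)$ is a gyrogroup with identity $0$ and gyroautomorphisms $\mathrm{gyr}[a,b]$; the restriction of $\oplus$ to $P(n)$ is addition modulo $m$, so $P(n)\cong\mathbb{Z}_m$. A subgyrogroup of a gyrogroup $G$ is a nonempty subset $H$ which is a gyrogroup under the restriction of $\oplus$ and such that for all $a,b\in H$ the restriction of $\mathrm{gyr}[a,b]$ to $H$ is an automorphism of $H$. For a subset $X$, $\langle X\rangle$ denotes the subgyrogroup generated by $X$ (the smallest subgyrogroup containing $X$); in (1), $\langle 2^s\rangle$ is the cyclic subgroup of $P(n)\cong\mathbb{Z}_m$ generated by $2^s$ modulo $m$. *)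

theory Defs
  imports Main
begin

definition mm :: "nat \<Rightarrow> nat" where "mm n = 2 ^ (n - 1)"

definition G2 :: "nat \<Rightarrow> nat set" where "G2 n = {..< 2 ^ n}"
definition PP :: "nat \<Rightarrow> nat set" where "PP n = {..< mm n}"
definition HH :: "nat \<Rightarrow> nat set" where "HH n = {mm n ..< 2 ^ n}"
definition OP :: "nat \<Rightarrow> nat set" where "OP n = {i \<in> PP n. odd i}"
definition EP :: "nat \<Rightarrow> nat set" where "EP n = {i \<in> PP n. even i}"
definition OH :: "nat \<Rightarrow> nat set" where "OH n = {i \<in> HH n. odd i}"
definition EH :: "nat \<Rightarrow> nat set" where "EH n = {i \<in> HH n. even i}"

definition goplus :: "nat \<Rightarrow> nat \<Rightarrow> nat \<Rightarrow> nat" where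
  "goplus n i j =
    (let m = mm n; t = (i + j) mod m; s = (i + j + m div 2) mod m in
     if (i, j) \<in> (PP n \<times> PP n) \<union> ((HH n \<times> HH n) - (EH n \<times> OH n)) then t
     else if (i, j) \<in> (PP n \<times> HH n) \<union> ((HH n \<times> PP n) - (EH n \<times> OP n)) then t + m
     else if (i, j) \<in> EH n \<times> OH n then s
     else if (i, j) \<in> EH n \<times> OP n then s + m
     else undefined)"

definition gA :: "nat \<Rightarrow> nat \<Rightarrow> nat" where
  "gA n i =
    (let m = mm n; r = (i + m div 2) mod m in
     if i \<in> OP n then r else if i \<in> OH n then r + m else i)"

definition gM :: "nat \<Rightarrow> (nat \<times> nat) set" where
  "gM n = (OP n \<times> (OH n \<union> EH n)) \<union> (OH n \<times> (OP n \<union> EH n)) \<union> (EH n \<times> (OP n \<union> OH n))"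

definition ggyr :: "nat \<Rightarrow> nat \<Rightarrow> nat \<Rightarrow> nat \<Rightarrow> nat" where
  "ggyr n a b = (if (a, b) \<in> gM n then gA n else id)"

definition is_aut_on :: "'a set \<Rightarrow> ('a \<Rightarrow> 'a \<Rightarrow> 'a) \<Rightarrow> ('a \<Rightarrow> 'a) \<Rightarrow> bool" where
  "is_aut_on S op f \<longleftrightarrow> bij_betw f S S \<and> (\<forall>x\<in>S. \<forall>y\<in>S. f (op x y) = op (f x) (f y))"

definition gyrogroup_on :: "'a set \<Rightarrow> ('a \<Rightarrow> 'a \<Rightarrow> 'a) \<Rightarrow> bool" where
  "gyrogroup_on S op \<longleftrightarrow>
     S \<noteq> {} \<and> (\<forall>a\<in>S. \<forall>b\<in>S. op a b \<in> S) \<and>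
     (\<exists>e\<in>S. (\<forall>a\<in>S. op e a = a) \<and> (\<forall>a\<in>S. \<exists>b\<in>S. op b a = e)) \<and>
     (\<exists>gyr. (\<forall>a\<in>S. \<forall>b\<in>S. \<forall>c\<in>S. op a (op b c) = op (op a b) (gyr a b c)) \<and>
            (\<forall>a\<in>S. \<forall>b\<in>S. is_aut_on S op (gyr a b)) \<and>
            (\<forall>a\<in>S. \<forall>b\<in>S. \<forall>c\<in>S. gyr (op a b) b c = gyr a b c))"

definition subgyrogroup :: "nat \<Rightarrow> nat set \<Rightarrow> bool" where
  "subgyrogroup n H \<longleftrightarrow> H \<noteq> {} \<and> H \<subseteq> G2 n \<and> gyrogroup_on H (goplus n) \<and>
     (\<forall>a\<in>H. \<forall>b\<in>H. is_aut_on H (goplus n) (ggyr n a b))"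

definition subgroup_G2 :: "nat \<Rightarrow> nat set \<Rightarrow> bool" where
  "subgroup_G2 n H \<longleftrightarrow> subgyrogroup n H \<and>
     (\<forall>a\<in>H. \<forall>b\<in>H. \<forall>c\<in>H. goplus n a (goplus n b c) = goplus n (goplus n a b) c) \<and>
     (\<forall>a\<in>H. \<forall>b\<in>H. \<forall>c\<in>H. ggyr n a b c = c)"

definition gen :: "nat \<Rightarrow> nat set \<Rightarrow> nat set" where
  "gen n X = \<Inter> {H. subgyrogroup n H \<and> X \<subseteq> H}"

definition cycP :: "nat \<Rightarrow> nat \<Rightarrow> nat set" where
  "cycP n s = {(k * 2 ^ s) mod mm n | k. True}"

end

theory Submission
  imports Defs "HOL-Computational_Algebra.Primes"
begin

text \<open>Write x < 2m as its residue x mod m together with its high bit [m <= x].  Then x \<oplus> y adds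
residues mod m and high bits mod 2, except that m/2 is added to the residue when x is even
and high and y is odd; the gyration A adds m/2 to odd residues.  Since 2 * (m/2) = m, every
identity of the gyrogroup reduces to comparing the parities of the numbers of such twists,
a finite case analysis.

Every element has finite order, so a nonempty subset H closed under \<oplus> contains 0 and
inverses, and H \<inter> P(n), a subgroup of Z_m, consists of the multiples of some 2^r.  A low q
and a high h give q \<oplus> h = (q + h) mod m + m, so H contains every high x congruent mod 2^r
to a high element of H.  If m is in H, H is therefore the set of all multiples of 2^r.
Otherwise, for high h in H, h \<oplus> h = 2h mod m lies in the low part, so 2^r divides 2h but
not h; hence r = s + 1 and all high elements of H are congruent to 2^s mod 2^(s+1), which
describes the cyclic group generated by m + 2^s.  Conversely, powers of one element never
twist, so cyclic subsets are closed, and a closed subset containing no pair of M is a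
subgroup.\<close>

lemma mod_add3_cong:
  fixes a b a' b' k :: "'a::euclidean_semiring_cancel"
  assumes "a mod c = a' mod c" "b mod c = b' mod c"
  shows "(a + b + k) mod c = (a' + b' + k) mod c"
  using assms by (intro mod_add_cong) simp_all

lemma mult_pow_mod_pow_Suc: "(j * 2 ^ s) mod 2 ^ Suc s = 2 ^ s * (j mod 2 :: nat)"
  using mod_mult_mult2[of j "2 ^ s" 2] by (simp add: mult.commute)

lemma mod_pow_Suc_eq:
  fixes y :: nat
  assumes "2 ^ s dvd y" "\<not> 2 ^ Suc s dvd y"
  shows "y mod 2 ^ Suc s = 2 ^ s"
proof -
  obtain u where u: "y = 2 ^ s * u"
    using assms(1) by blast
  then have "odd u"
    using assms(2) by auto
  moreover have "y mod 2 ^ Suc s = 2 ^ s * (u mod 2)"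
    unfolding u power_Suc by (metis mult.commute mod_mult_mult1)
  ultimately show ?thesis
    by (simp add: odd_iff_mod_2_eq_one)
qed

section \<open>Residue and high bit\<close>

locale G2_gyrogroup =
  fixes n :: nat
  assumes three_le_n: "3 \<le> n"
begin

abbreviation m :: nat where "m \<equiv> mm n"

abbreviation oplus :: "nat \<Rightarrow> nat \<Rightarrow> nat" (infixl "\<oplus>" 65) where
  "x \<oplus> y \<equiv> goplus n x y"

abbreviation gyr :: "nat \<Rightarrow> nat \<Rightarrow> nat \<Rightarrow> nat" where
  "gyr \<equiv> ggyr n"

lemma m_eq: "m = 4 * 2 ^ (n - 3)" and two_pow_n_eq: "2 ^ n = 2 * m"
proof -
  obtain k where "n = k + 3" using three_le_n by (metis add.commute le_Suc_ex)
  then show "m = 4 * 2 ^ (n - 3)" "2 ^ n = 2 * m" by (simp_all add: mm_def power_add)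
qed

lemma m_eq_double_half: "2 * (m div 2) = m"
  using m_eq by simp

lemma even_half_m: "even (m div 2)"
  using m_eq by simp

lemma m_pos: "0 < m"
  by (simp add: mm_def)

lemma even_m: "even m"
  using m_eq_double_half by (metis dvd_triv_left)

lemma pow_dvd_m: "s \<le> n - 1 \<Longrightarrow> 2 ^ s dvd m"
  by (simp add: mm_def le_imp_power_dvd)

lemma pow_less_m:
  assumes "s \<le> n - 2"
  shows "2 ^ s < m"
proof -
  have "2 * 2 ^ s \<le> m"
    using assms three_le_n pow_dvd_m[of "Suc s"] m_pos by (simp add: dvd_imp_le)
  then show ?thesis
    using zero_less_power[of "2::nat" s] by linarith
qed

lemma G2_eq: "G2 n = {..<2 * m}"
  by (simp add: G2_def two_pow_n_eq)

lemma even_mod_m_iff [simp]: "even (x mod m) \<longleftrightarrow> even x"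
  using even_m by (simp add: dvd_mod_iff)

lemma high_bit_less: "r < m \<Longrightarrow> r + m * of_bool b < 2 * m"
  by (cases b) auto

lemma high_bit_mod: "r < m \<Longrightarrow> (r + m * of_bool b) mod m = r"
  by (cases b) auto

lemma high_bit_ge_iff: "r < m \<Longrightarrow> m \<le> r + m * of_bool b \<longleftrightarrow> b"
  by (cases b) auto

lemmas high_bit_simps = high_bit_less high_bit_mod high_bit_ge_iff

lemma div_m_eq: "x < 2 * m \<Longrightarrow> x div m = of_bool (m \<le> x)"
  by (auto intro: div_nat_eqI)

lemma eq_if_mod_m_eq:
  assumes "u < 2 * m" "v < 2 * m" "u mod m = v mod m" "m \<le> u \<longleftrightarrow> m \<le> v"
  shows "u = v"
proof -
  have "u div m = v div m"
    using assms by (simp add: div_m_eq)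
  then show ?thesis
    using assms(3) by (metis div_mult_mod_eq)
qed

lemma split_high_bit: "x < 2 * m \<Longrightarrow> x = x mod m + m * of_bool (m \<le> x)"
  by (rule eq_if_mod_m_eq) (simp_all add: high_bit_simps m_pos)

lemma mod_add_half_m_cong:
  assumes "k mod 2 = l mod 2"
  shows "(s + m div 2 * k) mod m = (s + m div 2 * l) mod m"
proof -
  have reduce: "(s + m div 2 * k) mod m = (s + m div 2 * (k mod 2)) mod m" for k
  proof -
    have "m div 2 * k = m div 2 * (k mod 2 + 2 * (k div 2))"
      by simp
    also have "\<dots> = m div 2 * (k mod 2) + (2 * (m div 2)) * (k div 2)"
      by (simp only: distrib_left mult.left_commute)
    finally show ?thesis
      by (simp add: m_eq_double_half flip: add.assoc)
  qed
  show ?thesis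
    using reduce[of k] reduce[of l] assms by simp
qed

lemma eq_if_twist_parity_eq:
  assumes "u < 2 * m" "v < 2 * m"
    and "u mod m = (w + m div 2 * k) mod m" "v mod m = (w + m div 2 * l) mod m"
    and "k mod 2 = l mod 2" "m \<le> u \<longleftrightarrow> m \<le> v"
  shows "u = v"
proof (rule eq_if_mod_m_eq)
  have "(w + m div 2 * k) mod m = (w + m div 2 * l) mod m"
    using assms(5) by (rule mod_add_half_m_cong)
  then show "u mod m = v mod m"
    using assms(3,4) by simp
qed (use assms in auto)

lemma goplus_eq:
  assumes "i < 2 * m" "j < 2 * m"
  shows "i \<oplus> j = (i + j + m div 2 * of_bool (m \<le> i \<and> even i \<and> odd j)) mod m
                    + m * of_bool ((m \<le> i) \<noteq> (m \<le> j))"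
  using assms
  by (cases "m \<le> i"; cases "m \<le> j")
     (simp_all add: goplus_def Let_def PP_def HH_def EH_def OH_def OP_def two_pow_n_eq)

context
  fixes i j :: nat
  assumes i: "i < 2 * m" and j: "j < 2 * m"
begin

lemma goplus_less: "i \<oplus> j < 2 * m"
  using i j by (simp add: goplus_eq high_bit_less m_pos)

lemma goplus_mod: "(i \<oplus> j) mod m = (i + j + m div 2 * of_bool (m \<le> i \<and> even i \<and> odd j)) mod m"
  using i j by (simp add: goplus_eq high_bit_mod m_pos)

lemma goplus_ge_m_iff: "m \<le> i \<oplus> j \<longleftrightarrow> (m \<le> i \<longleftrightarrow> \<not> m \<le> j)"
  using i j by (simp add: goplus_eq high_bit_ge_iff m_pos)

lemma even_goplus_iff: "even (i \<oplus> j) \<longleftrightarrow> (even i \<longleftrightarrow> even j)"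
  using i j even_half_m even_m by (auto simp: goplus_eq dvd_mod_iff)

end

lemma zero_goplus: "x < 2 * m \<Longrightarrow> 0 \<oplus> x = x"
  using split_high_bit[of x] by (simp add: goplus_eq m_pos)

lemma goplus_low: "a < m \<Longrightarrow> b < m \<Longrightarrow> a \<oplus> b = (a + b) mod m"
  by (simp add: goplus_eq)

lemma goplus_low_high: "q < m \<Longrightarrow> m \<le> h \<Longrightarrow> h < 2 * m \<Longrightarrow> q \<oplus> h = (q + h) mod m + m"
  by (simp add: goplus_eq)

lemma goplus_high_self: "m \<le> h \<Longrightarrow> h < 2 * m \<Longrightarrow> h \<oplus> h = (h + h) mod m"
  by (simp add: goplus_eq)

lemma goplus_high_m: "m \<le> x \<Longrightarrow> x < 2 * m \<Longrightarrow> x \<oplus> m = x - m"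
  using even_m by (simp add: goplus_eq le_mod_geq)

lemma gM_iff:
  assumes "a < 2 * m" "b < 2 * m"
  shows "(a, b) \<in> gM n \<longleftrightarrow>
    odd a \<and> \<not> m \<le> a \<and> m \<le> b \<or>
    odd a \<and> m \<le> a \<and> (odd b \<longleftrightarrow> \<not> m \<le> b) \<or>
    even a \<and> m \<le> a \<and> odd b"
  using assms two_pow_n_eq by (auto simp: gM_def OP_def OH_def EH_def PP_def HH_def)

lemma gM_imp_high: "(a, b) \<in> gM n \<Longrightarrow> m \<le> a \<or> m \<le> b"
  by (auto simp: gM_def OP_def OH_def EH_def HH_def)

lemma gM_imp_odd: "(a, b) \<in> gM n \<Longrightarrow> odd a \<or> odd b"
  by (auto simp: gM_def OP_def OH_def EH_def)

lemma gM_imp_parity_ne_high: "(a, b) \<in> gM n \<Longrightarrow> (odd a \<longleftrightarrow> \<not> m \<le> a) \<or> (odd b \<longleftrightarrow> \<not> m \<le> b)"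
  by (auto simp: gM_def OP_def OH_def EH_def PP_def HH_def)

lemma gyr_eq:
  assumes "x < 2 * m"
  shows "gyr a b x = (x + m div 2 * of_bool ((a, b) \<in> gM n \<and> odd x)) mod m + m * of_bool (m \<le> x)"
  using assms split_high_bit[OF assms] two_pow_n_eq
  by (cases "(a, b) \<in> gM n"; cases "m \<le> x")
     (auto simp: ggyr_def gA_def Let_def OP_def OH_def PP_def HH_def)

context
  fixes x :: nat
  assumes x: "x < 2 * m"
begin

lemma gyr_less: "gyr a b x < 2 * m"
  using x by (simp add: gyr_eq high_bit_less m_pos)

lemma gyr_mod: "gyr a b x mod m = (x + m div 2 * of_bool ((a, b) \<in> gM n \<and> odd x)) mod m"
  using x by (simp add: gyr_eq high_bit_mod m_pos)

lemma gyr_ge_m_iff: "m \<le> gyr a b x \<longleftrightarrow> m \<le> x"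
  using x by (simp add: gyr_eq high_bit_ge_iff m_pos)

lemma even_gyr_iff: "even (gyr a b x) \<longleftrightarrow> even x"
  using x even_half_m even_m by (auto simp: gyr_eq dvd_mod_iff)

end

section \<open>The gyrogroup axioms\<close>

lemma left_gyroassoc:
  assumes a: "a < 2 * m" and b: "b < 2 * m" and x: "x < 2 * m"
  shows "a \<oplus> (b \<oplus> x) = (a \<oplus> b) \<oplus> gyr a b x"
proof -
  define y z g where "y = b \<oplus> x" and "z = a \<oplus> b" and "g = gyr a b x"
  have y: "y < 2 * m" and z: "z < 2 * m" and g: "g < 2 * m"
    unfolding y_def z_def g_def using a b x by (simp_all add: goplus_less gyr_less)
  define d1 d2 d3 d4 d5 :: nat where
    "d1 = of_bool (m \<le> b \<and> even b \<and> odd x)" and "d2 = of_bool (m \<le> a \<and> even a \<and> odd y)"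
    and "d3 = of_bool (m \<le> a \<and> even a \<and> odd b)" and "d4 = of_bool (m \<le> z \<and> even z \<and> odd g)"
    and "d5 = of_bool ((a, b) \<in> gM n \<and> odd x)"
  have "(a \<oplus> y) mod m = (a + y + m div 2 * d2) mod m"
    using goplus_mod[OF a y] by (simp add: d2_def)
  also have "\<dots> = (a + (b + x + m div 2 * d1) + m div 2 * d2) mod m"
    using goplus_mod[OF b x] by (intro mod_add3_cong) (simp_all add: y_def d1_def)
  finally have left: "(a \<oplus> y) mod m = (a + b + x + m div 2 * (d1 + d2)) mod m"
    by (simp add: distrib_left add.assoc)
  have "(z \<oplus> g) mod m = (z + g + m div 2 * d4) mod m"
    using goplus_mod[OF z g] by (simp add: d4_def)
  also have "\<dots> = ((a + b + m div 2 * d3) + (x + m div 2 * d5) + m div 2 * d4) mod m"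
    using goplus_mod[OF a b] gyr_mod[OF x] by (intro mod_add3_cong) (simp_all add: z_def g_def d3_def d5_def)
  finally have right: "(z \<oplus> g) mod m = (a + b + x + m div 2 * (d3 + d4 + d5)) mod m"
    by (simp add: distrib_left add_ac)
  have "(d1 + d2) mod 2 = (d3 + d4 + d5) mod 2"
    unfolding d1_def d2_def d3_def d4_def d5_def y_def z_def g_def
    using gM_iff[OF a b] even_goplus_iff[OF a b] even_goplus_iff[OF b x]
      goplus_ge_m_iff[OF a b] even_gyr_iff[OF x]
    by (cases "m \<le> a"; cases "m \<le> b"; cases "odd a"; cases "odd b"; cases "odd x"; simp)
  moreover have "m \<le> a \<oplus> y \<longleftrightarrow> m \<le> z \<oplus> g"
    using a b x y z g by (simp add: goplus_ge_m_iff gyr_ge_m_iff y_def z_def g_def) blast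
  ultimately have "a \<oplus> y = z \<oplus> g"
    by (rule eq_if_twist_parity_eq[OF goplus_less[OF a y] goplus_less[OF z g] left right])
  then show ?thesis
    by (simp add: y_def z_def g_def)
qed

lemma left_loop:
  assumes a: "a < 2 * m" and b: "b < 2 * m"
  shows "gyr (a \<oplus> b) b = gyr a b"
proof -
  have "(a \<oplus> b, b) \<in> gM n \<longleftrightarrow> (a, b) \<in> gM n"
    using gM_iff[OF goplus_less[OF a b] b] gM_iff[OF a b] even_goplus_iff[OF a b] goplus_ge_m_iff[OF a b]
    by (cases "m \<le> a"; cases "m \<le> b"; cases "odd a"; cases "odd b"; simp)
  then show ?thesis
    by (simp add: ggyr_def)
qed

lemma gyr_goplus:
  assumes x: "x < 2 * m" and y: "y < 2 * m"
  shows "gyr a b (x \<oplus> y) = gyr a b x \<oplus> gyr a b y"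
proof -
  define G where "G = ((a, b) \<in> gM n)"
  have xy: "x \<oplus> y < 2 * m" and gx: "gyr a b x < 2 * m" and gy: "gyr a b y < 2 * m"
    using x y by (simp_all add: goplus_less gyr_less)
  define d1 d2 d3 d4 :: nat where
    "d1 = of_bool (m \<le> x \<and> even x \<and> odd y)" and "d2 = of_bool (G \<and> odd (x \<oplus> y))"
    and "d3 = of_bool (G \<and> odd x)" and "d4 = of_bool (G \<and> odd y)"
  have "gyr a b (x \<oplus> y) mod m = ((x \<oplus> y) + m div 2 * d2) mod m"
    using gyr_mod[OF xy] by (simp add: d2_def G_def)
  also have "\<dots> = ((x + y + m div 2 * d1) + m div 2 * d2) mod m"
    using goplus_mod[OF x y] by (intro mod_add_cong) (simp_all add: d1_def)
  finally have left: "gyr a b (x \<oplus> y) mod m = (x + y + m div 2 * (d1 + d2)) mod m"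
    by (simp add: distrib_left add.assoc)
  have "(gyr a b x \<oplus> gyr a b y) mod m = (gyr a b x + gyr a b y + m div 2 * d1) mod m"
    using goplus_mod[OF gx gy] by (simp add: d1_def gyr_ge_m_iff[OF x] even_gyr_iff[OF x] even_gyr_iff[OF y])
  also have "\<dots> = ((x + m div 2 * d3) + (y + m div 2 * d4) + m div 2 * d1) mod m"
    using gyr_mod[OF x] gyr_mod[OF y] by (intro mod_add3_cong) (simp_all add: d3_def d4_def G_def)
  finally have right: "(gyr a b x \<oplus> gyr a b y) mod m = (x + y + m div 2 * (d3 + d4 + d1)) mod m"
    by (simp add: distrib_left add_ac)
  have "(d1 + d2) mod 2 = (d3 + d4 + d1) mod 2"
    unfolding d1_def d2_def d3_def d4_def using even_goplus_iff[OF x y]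
    by (cases G; cases "odd x"; cases "odd y"; simp)
  moreover have "m \<le> gyr a b (x \<oplus> y) \<longleftrightarrow> m \<le> gyr a b x \<oplus> gyr a b y"
    using goplus_ge_m_iff[OF x y] goplus_ge_m_iff[OF gx gy] gyr_ge_m_iff[OF xy] gyr_ge_m_iff[OF x]
      gyr_ge_m_iff[OF y] by simp
  ultimately show ?thesis
    by (rule eq_if_twist_parity_eq[OF gyr_less[OF xy] goplus_less[OF gx gy] left right])
qed

lemma gyr_gyr:
  assumes x: "x < 2 * m"
  shows "gyr a b (gyr a b x) = x"
proof -
  have gx: "gyr a b x < 2 * m"
    using x by (rule gyr_less)
  define d :: nat where "d = of_bool ((a, b) \<in> gM n \<and> odd x)"
  have "gyr a b (gyr a b x) mod m = (gyr a b x + m div 2 * d) mod m"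
    using gyr_mod[OF gx] even_gyr_iff[OF x] by (simp add: d_def)
  also have "\<dots> = ((x + m div 2 * d) + m div 2 * d) mod m"
    using gyr_mod[OF x] by (intro mod_add_cong) (simp_all add: d_def)
  finally have twice: "gyr a b (gyr a b x) mod m = (x + m div 2 * (d + d)) mod m"
    by (simp add: distrib_left add.assoc)
  show ?thesis
    using gyr_ge_m_iff[OF gx] gyr_ge_m_iff[OF x]
    by (intro eq_if_twist_parity_eq[OF gyr_less[OF gx] x twice, where l = 0]) simp_all
qed

section \<open>Powers and closed subsets\<close>

primrec gpow :: "nat \<Rightarrow> nat \<Rightarrow> nat" where
  "gpow g 0 = 0"
| "gpow g (Suc k) = gpow g k \<oplus> g"

lemma gpow_eq:
  assumes g: "g < 2 * m"
  shows "gpow g k = (k * g) mod m + m * of_bool (odd k \<and> m \<le> g)"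
proof (induction k)
  case 0
  show ?case by simp
next
  case (Suc k)
  define p where "p = (k * g) mod m + m * of_bool (odd k \<and> m \<le> g)"
  have p: "p < 2 * m" "p mod m = (k * g) mod m" "m \<le> p \<longleftrightarrow> odd k \<and> m \<le> g"
    and even_p: "even p \<longleftrightarrow> even (k * g)"
    by (simp_all add: p_def high_bit_simps m_pos even_m)
  have "(p \<oplus> g) mod m = (p + g) mod m"
    using goplus_mod[OF p(1) g] p(3) even_p by auto
  also have "\<dots> = (Suc k * g) mod m"
    using p(2) by (metis add.commute mod_add_right_eq mult_Suc)
  finally have "(p \<oplus> g) mod m = (Suc k * g) mod m" .
  moreover have "m \<le> p \<oplus> g \<longleftrightarrow> even k \<and> m \<le> g"
    using goplus_ge_m_iff[OF p(1) g] p(3) by auto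
  ultimately have "p \<oplus> g = (Suc k * g) mod m + m * of_bool (odd (Suc k) \<and> m \<le> g)"
    by (intro eq_if_mod_m_eq[OF goplus_less[OF p(1) g]]) (simp_all add: high_bit_simps m_pos)
  then show ?case
    by (simp add: Suc p_def)
qed

lemma gpow_low: "y < m \<Longrightarrow> gpow y k = (k * y) mod m"
  by (simp add: gpow_eq)

lemma gpow_double_m: "g < 2 * m \<Longrightarrow> gpow g (2 * m) = 0"
  by (simp add: gpow_eq)

lemma gpow_add:
  assumes g: "g < 2 * m"
  shows "gpow g k \<oplus> gpow g l = gpow g (k + l)"
proof -
  have less: "gpow g j < 2 * m" and mod: "gpow g j mod m = (j * g) mod m"
    and high: "m \<le> gpow g j \<longleftrightarrow> odd j \<and> m \<le> g" and even: "even (gpow g j) \<longleftrightarrow> even (j * g)" for j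
    using g by (simp_all add: gpow_eq high_bit_simps m_pos even_m)
  have "(gpow g k \<oplus> gpow g l) mod m = (gpow g k + gpow g l) mod m"
    \<comment> \<open>no twist: it would need an odd \<open>k\<close> with \<open>k * g\<close> even, and an odd \<open>g\<close>\<close>
    using goplus_mod[OF less less] high even by auto
  also have "\<dots> = ((k + l) * g) mod m"
    using mod by (metis add_mult_distrib mod_add_eq)
  finally show ?thesis
    using goplus_ge_m_iff[OF less less] high mod[of "k + l"]
    by (intro eq_if_mod_m_eq[OF goplus_less[OF less less] less]) auto
qed

end

locale G2_closed_subset = G2_gyrogroup +
  fixes H :: "nat set"
  assumes subset_carrier: "H \<subseteq> {..<2 * m}"
    and goplus_closed: "a \<in> H \<Longrightarrow> b \<in> H \<Longrightarrow> a \<oplus> b \<in> H"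
begin

lemma mem_less: "x \<in> H \<Longrightarrow> x < 2 * m"
  using subset_carrier by auto

lemma gpow_Suc_mem:
  assumes "g \<in> H"
  shows "gpow g (Suc k) \<in> H"
proof (induction k)
  case 0
  show ?case
    using assms by (simp add: zero_goplus mem_less)
next
  case (Suc k)
  show ?case
    unfolding gpow.simps(2)[of g "Suc k"] using Suc assms by (rule goplus_closed)
qed

lemma zero_mem: "g \<in> H \<Longrightarrow> 0 \<in> H"
  using gpow_Suc_mem[of g "2 * m - 1"] gpow_double_m[OF mem_less] m_pos
  by (simp add: Suc_diff_Suc)

lemma gpow_mem: "g \<in> H \<Longrightarrow> gpow g k \<in> H"
  by (cases k) (simp_all add: zero_mem gpow_Suc_mem del: gpow.simps(2))

lemma low_mult_mem: "y \<in> H \<Longrightarrow> y < m \<Longrightarrow> (k * y) mod m \<in> H"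
  using gpow_mem[of y k] by (simp add: gpow_low)

lemma inverse_mem:
  assumes "g \<in> H"
  shows "\<exists>h\<in>H. h \<oplus> g = 0"
proof
  have "2 * m = Suc (2 * m - 1)"
    using m_pos by simp
  then show "gpow g (2 * m - 1) \<oplus> g = 0"
    using gpow_double_m[OF mem_less[OF assms]] by (metis gpow.simps(2))
qed (use assms gpow_mem in blast)

lemma subgyrogroupI:
  assumes nonempty: "H \<noteq> {}"
    and gyr_closed: "\<And>a b x. a \<in> H \<Longrightarrow> b \<in> H \<Longrightarrow> x \<in> H \<Longrightarrow> gyr a b x \<in> H"
  shows "subgyrogroup n H"
proof -
  have aut: "is_aut_on H (\<oplus>) (gyr a b)" if "a \<in> H" "b \<in> H" for a b
  proof -
    have "bij_betw (gyr a b) H H"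
      by (rule bij_betw_byWitness[where f' = "gyr a b"])
         (use that gyr_closed gyr_gyr mem_less in auto)
    then show ?thesis
      unfolding is_aut_on_def by (simp add: gyr_goplus mem_less)
  qed
  obtain g where "g \<in> H"
    using nonempty by blast
  then have "0 \<in> H" by (rule zero_mem)
  then have identity: "\<exists>e\<in>H. (\<forall>a\<in>H. e \<oplus> a = a) \<and> (\<forall>a\<in>H. \<exists>b\<in>H. b \<oplus> a = e)"
    using inverse_mem zero_goplus mem_less by blast
  have "gyrogroup_on H (\<oplus>)"
    unfolding gyrogroup_on_def
  proof (intro conjI exI[of _ gyr])
    show "\<forall>a\<in>H. \<forall>b\<in>H. \<forall>c\<in>H. a \<oplus> (b \<oplus> c) = (a \<oplus> b) \<oplus> gyr a b c"
      by (simp add: left_gyroassoc mem_less)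
    show "\<forall>a\<in>H. \<forall>b\<in>H. \<forall>c\<in>H. gyr (a \<oplus> b) b c = gyr a b c"
      by (simp add: left_loop mem_less)
  qed (use nonempty goplus_closed identity aut in auto)
  then show ?thesis
    unfolding subgyrogroup_def using nonempty subset_carrier aut G2_eq by auto
qed

lemma subgroup_G2I:
  assumes nonempty: "H \<noteq> {}"
    and gyration_free: "\<And>a b. a \<in> H \<Longrightarrow> b \<in> H \<Longrightarrow> (a, b) \<notin> gM n"
  shows "subgroup_G2 n H"
proof -
  have gyr_id: "gyr a b x = x" if "a \<in> H" "b \<in> H" for a b x
    using gyration_free[OF that] by (simp add: ggyr_def)
  have "subgyrogroup n H"
    using nonempty gyr_id by (intro subgyrogroupI) simp_all
  moreover have "a \<oplus> (b \<oplus> c) = (a \<oplus> b) \<oplus> c" if "a \<in> H" "b \<in> H" "c \<in> H" for a b c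
    using left_gyroassoc[of a b c] gyr_id that mem_less by simp
  ultimately show ?thesis
    unfolding subgroup_G2_def using gyr_id by blast
qed

end

lemma (in G2_gyrogroup) subgyrogroup_imp_closed:
  assumes "subgyrogroup n H"
  shows "G2_closed_subset n H"
  using assms by unfold_locales (auto simp: subgyrogroup_def gyrogroup_on_def G2_eq)

section \<open>Three families of subgyrogroups\<close>

context G2_gyrogroup
begin

definition P_multiples :: "nat \<Rightarrow> nat set" where
  "P_multiples s = {x. x < m \<and> 2 ^ s dvd x}"

definition G_multiples :: "nat \<Rightarrow> nat set" where
  "G_multiples s = {x. x < 2 * m \<and> 2 ^ s dvd x}"

text \<open>The cyclic subgroup generated by \<open>m + 2 ^ s\<close>: the multiples of \<open>2 ^ (s + 1)\<close>
  below \<open>m\<close>, together with \<open>m\<close> plus the odd multiples of \<open>2 ^ s\<close>.\<close>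

definition G_shifted :: "nat \<Rightarrow> nat set" where
  "G_shifted s = {x. x < 2 * m \<and> x mod 2 ^ Suc s = 2 ^ s * of_bool (m \<le> x)}"

lemma cycP_eq_P_multiples:
  assumes "s \<le> n - 1"
  shows "cycP n s = P_multiples s"
proof
  show "cycP n s \<subseteq> P_multiples s"
    using pow_dvd_m[OF assms] m_pos by (auto simp: cycP_def P_multiples_def dvd_mod_iff)
  show "P_multiples s \<subseteq> cycP n s"
  proof
    fix x assume "x \<in> P_multiples s"
    then have "x = (x div 2 ^ s * 2 ^ s) mod m"
      by (simp add: P_multiples_def)
    then show "x \<in> cycP n s"
      unfolding cycP_def by blast
  qed
qed

lemma gpow_m_plus_pow:
  assumes "s \<le> n - 2"
  shows "gpow (m + 2 ^ s) k = (k * 2 ^ s) mod m + m * of_bool (odd k)"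
proof -
  have "(k * (m + 2 ^ s)) mod m = (k * 2 ^ s) mod m"
    by (simp add: distrib_left)
  then show ?thesis
    using pow_less_m[OF assms] by (simp add: gpow_eq)
qed

lemma G_shifted_eq_range_gpow:
  assumes "s \<le> n - 2"
  shows "G_shifted s = range (gpow (m + 2 ^ s))"
proof -
  have dvd_m: "2 ^ Suc s dvd m"
    using assms three_le_n pow_dvd_m[of "Suc s"] by simp
  have less: "2 ^ s < m"
    using pow_less_m[OF assms] .
  note gpow = gpow_m_plus_pow[OF assms]
  show ?thesis
  proof (intro equalityI subsetI)
    fix x assume x: "x \<in> G_shifted s"
    define k where "k = 2 * (x mod m div 2 ^ Suc s) + of_bool (m \<le> x)"
    have "x mod m mod 2 ^ Suc s = 2 ^ s * of_bool (m \<le> x)"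
      using x dvd_m by (simp add: G_shifted_def mod_mod_cancel)
    then have "k * 2 ^ s = x mod m"
      unfolding k_def using div_mult_mod_eq[of "x mod m" "2 ^ Suc s"]
      by (simp add: algebra_simps)
    then have "gpow (m + 2 ^ s) k = x"
      using x split_high_bit[of x] by (simp add: gpow G_shifted_def k_def)
    then show "x \<in> range (gpow (m + 2 ^ s))"
      by (metis rangeI)
  next
    fix x assume "x \<in> range (gpow (m + 2 ^ s))"
    then obtain k where x: "x = (k * 2 ^ s) mod m + m * of_bool (odd k)"
      using gpow by blast
    have "x mod 2 ^ Suc s = (k * 2 ^ s) mod 2 ^ Suc s"
      using dvd_m unfolding x by (cases "odd k") (simp_all add: mod_mod_cancel mod_add_right_eq[symmetric])
    then show "x \<in> G_shifted s"
      using mult_pow_mod_pow_Suc[of k] x less by (simp add: G_shifted_def high_bit_simps m_pos odd_iff_mod_2_eq_one)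
  qed
qed

lemma range_gpow_closed:
  assumes "g < 2 * m"
  shows "G2_closed_subset n (range (gpow g))"
proof
  show "range (gpow g) \<subseteq> {..<2 * m}"
    using assms by (auto simp: gpow_eq high_bit_less m_pos)
qed (auto simp: gpow_add[OF assms])

lemma P_multiples_closed:
  assumes "s \<le> n - 1"
  shows "G2_closed_subset n (P_multiples s)"
  using pow_dvd_m[OF assms] m_pos
  by unfold_locales (auto simp: P_multiples_def goplus_low dvd_mod_iff)

lemma G_multiples_closed:
  assumes "s \<le> n - 1"
  shows "G2_closed_subset n (G_multiples s)"
proof
  show "G_multiples s \<subseteq> {..<2 * m}"
    by (auto simp: G_multiples_def)
next
  fix a b assume ab: "a \<in> G_multiples s" "b \<in> G_multiples s"
  have "2 ^ s dvd (a + b + m div 2 * of_bool (m \<le> a \<and> even a \<and> odd b)) mod m"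
  proof (cases "s = 0")
    case False
    then have "even b"
      using ab by (auto simp: G_multiples_def dvd_power_iff_le intro: dvd_trans[of 2 "2 ^ s"])
    then show ?thesis
      using ab pow_dvd_m[OF assms] by (simp add: G_multiples_def dvd_mod_iff)
  qed simp
  moreover have "a \<oplus> b < 2 * m"
    using ab by (simp add: G_multiples_def goplus_less)
  ultimately show "a \<oplus> b \<in> G_multiples s"
    using ab pow_dvd_m[OF assms] by (simp add: G_multiples_def goplus_eq)
qed

lemma even_G_shifted_iff:
  assumes "x \<in> G_shifted s"
  shows "even x \<longleftrightarrow> s \<noteq> 0 \<or> \<not> m \<le> x"
proof -
  have "even x \<longleftrightarrow> even (x mod 2 ^ Suc s)"
    by (simp add: dvd_mod_iff)
  then show ?thesis
    using assms by (cases s) (auto simp: G_shifted_def)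
qed

lemma subgroup_P_multiples:
  assumes "s \<le> n - 1"
  shows "subgroup_G2 n (P_multiples s)"
proof (rule G2_closed_subset.subgroup_G2I[OF P_multiples_closed[OF assms]])
  show "P_multiples s \<noteq> {}"
    using m_pos by (auto simp: P_multiples_def)
qed (auto simp: P_multiples_def dest: gM_imp_high)

lemma subgroup_G_multiples:
  assumes "0 < s" "s \<le> n - 1"
  shows "subgroup_G2 n (G_multiples s)"
proof (rule G2_closed_subset.subgroup_G2I[OF G_multiples_closed[OF assms(2)]])
  have "0 \<in> G_multiples s"
    using m_pos by (simp add: G_multiples_def)
  then show "G_multiples s \<noteq> {}"
    by blast
  have "even x" if "x \<in> G_multiples s" for x
    using that assms(1) by (auto simp: G_multiples_def intro: dvd_trans[of 2 "2 ^ s"])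
  then show "(a, b) \<notin> gM n" if "a \<in> G_multiples s" "b \<in> G_multiples s" for a b
    using that gM_imp_odd by blast
qed

lemma subgyrogroup_G_multiples:
  assumes "s \<le> n - 1"
  shows "subgyrogroup n (G_multiples s)"
proof (cases "s = 0")
  case True
  show ?thesis
  proof (rule G2_closed_subset.subgyrogroupI[OF G_multiples_closed[OF assms]])
    have "0 \<in> G_multiples s"
      using m_pos by (simp add: G_multiples_def)
    then show "G_multiples s \<noteq> {}"
      by blast
  qed (simp add: True G_multiples_def gyr_less)
next
  case False
  then show ?thesis
    using subgroup_G_multiples assms by (simp add: subgroup_G2_def)
qed

lemma G_multiples_0: "G_multiples 0 = G2 n"
  by (auto simp: G_multiples_def G2_eq)

lemma not_subgroup_G2: "\<not> subgroup_G2 n (G2 n)"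
proof
  assume "subgroup_G2 n (G2 n)"
  moreover have "1 \<in> G2 n" "m \<in> G2 n"
    using m_pos by (simp_all add: G2_eq)
  ultimately have "gyr 1 m 1 = 1"
    unfolding subgroup_G2_def by blast
  moreover have "(1, m) \<in> gM n"
    using m_pos even_m by (simp add: gM_iff)
  moreover have "gA n 1 = 1 + m div 2"
  proof -
    have "m div 2 = 2 * 2 ^ (n - 3)" "1 \<le> (2::nat) ^ (n - 3)"
      using m_eq by simp_all
    then have "0 < m div 2" "1 + m div 2 < m"
      using m_eq by linarith+
    then show ?thesis
      by (simp add: gA_def Let_def OP_def PP_def)
  qed
  ultimately show False
    using m_eq by (simp add: ggyr_def)
qed

lemma subgroup_G_shifted:
  assumes "s \<le> n - 2"
  shows "subgroup_G2 n (G_shifted s)"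
proof (rule G2_closed_subset.subgroup_G2I)
  show "G2_closed_subset n (G_shifted s)"
    using G_shifted_eq_range_gpow[OF assms] range_gpow_closed pow_less_m[OF assms] by simp
  have "0 \<in> G_shifted s"
    using m_pos by (simp add: G_shifted_def)
  then show "G_shifted s \<noteq> {}"
    by blast
  show "(a, b) \<notin> gM n" if "a \<in> G_shifted s" "b \<in> G_shifted s" for a b
    using that even_G_shifted_iff gM_imp_odd gM_imp_parity_ne_high by (cases "s = 0") blast+
qed

lemma gen_eqI:
  assumes "subgyrogroup n S" "X \<subseteq> S" "\<And>H. subgyrogroup n H \<Longrightarrow> X \<subseteq> H \<Longrightarrow> S \<subseteq> H"
  shows "gen n X = S"
  unfolding gen_def using assms by blast

lemma gen_G_shifted:
  assumes "s \<le> n - 2"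
  shows "gen n {m + 2 ^ s} = G_shifted s"
proof (rule gen_eqI)
  show "subgyrogroup n (G_shifted s)"
    using subgroup_G_shifted[OF assms] by (simp add: subgroup_G2_def)
  have "gpow (m + 2 ^ s) 1 = m + 2 ^ s"
    using pow_less_m[OF assms] by (simp add: zero_goplus)
  then show "{m + 2 ^ s} \<subseteq> G_shifted s"
    using G_shifted_eq_range_gpow[OF assms] by (metis empty_subsetI insert_subset rangeI)
  show "G_shifted s \<subseteq> H" if "subgyrogroup n H" "{m + 2 ^ s} \<subseteq> H" for H
    using G2_closed_subset.gpow_mem[OF subgyrogroup_imp_closed[OF that(1)]] that(2)
    by (auto simp: G_shifted_eq_range_gpow[OF assms])
qed

end

context G2_closed_subset
begin

lemma P_multiples_subset:
  assumes s: "s \<le> n - 1" and mem: "2 ^ s \<in> H"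
  shows "P_multiples s \<subseteq> H"
proof
  fix x assume x: "x \<in> P_multiples s"
  have "2 ^ s mod m \<in> H"
  proof (cases "2 ^ s < m")
    case False
    then have "2 ^ s = m"
      using pow_dvd_m[OF s] m_pos by (simp add: dvd_imp_le le_antisym)
    then show ?thesis
      using zero_mem[OF mem] by simp
  qed (use mem in simp)
  then have "(x div 2 ^ s * (2 ^ s mod m)) mod m \<in> H"
    using m_pos by (simp add: low_mult_mem)
  moreover have "(x div 2 ^ s * (2 ^ s mod m)) mod m = x"
    using x by (simp add: P_multiples_def mod_mult_right_eq)
  ultimately show "x \<in> H"
    by simp
qed

lemma high_mem_if_mod_eq:
  assumes low: "P_multiples r \<subseteq> H" and r: "r \<le> n - 1"
    and h: "h \<in> H" "m \<le> h" and x: "m \<le> x" "x < 2 * m"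
    and mod_eq: "x mod 2 ^ r = h mod 2 ^ r"
  shows "x \<in> H"
proof -
  define q where "q = (x + m - h) mod m"
  have dvd_m: "2 ^ r dvd m"
    using r by (rule pow_dvd_m)
  have "(x + m) mod 2 ^ r = h mod 2 ^ r"
    using dvd_m mod_eq by (metis add_0_right dvd_imp_mod_0 mod_add_right_eq)
  moreover have h_le: "h \<le> x + m"
    using x(1) mem_less[OF h(1)] by linarith
  ultimately have "2 ^ r dvd x + m - h"
    by (simp add: mod_eq_dvd_iff_nat)
  then have "q \<in> P_multiples r"
    using dvd_m m_pos by (simp add: q_def P_multiples_def dvd_mod_iff)
  then have "q \<oplus> h \<in> H"
    using low h(1) goplus_closed by blast
  moreover have "q \<oplus> h = x"
  proof -
    have "q \<oplus> h = (x + m - h + h) mod m + m"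
      using h mem_less m_pos by (simp add: q_def goplus_low_high mod_add_left_eq)
    also have "\<dots> = (x + m) mod m + m"
      using h_le by simp
    also have "\<dots> = x"
      using x by (simp add: le_mod_geq)
    finally show ?thesis .
  qed
  ultimately show ?thesis
    by simp
qed

lemma G_multiples_subset:
  assumes s: "s \<le> n - 1" and mem: "2 ^ s \<in> H" "m \<in> H"
  shows "G_multiples s \<subseteq> H"
proof
  fix x assume x: "x \<in> G_multiples s"
  show "x \<in> H"
  proof (cases "m \<le> x")
    case True
    then show ?thesis
      using x pow_dvd_m[OF s] high_mem_if_mod_eq[OF P_multiples_subset[OF s mem(1)] s mem(2)]
      by (simp add: G_multiples_def)
  next
    case False
    then show ?thesis
      using x P_multiples_subset[OF s mem(1)] by (auto simp: G_multiples_def P_multiples_def)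
  qed
qed

end

lemma (in G2_gyrogroup) gen_G_multiples:
  assumes s: "s \<le> n - 1"
  shows "gen n {2 ^ s, m} = G_multiples s"
proof (rule gen_eqI)
  show "subgyrogroup n (G_multiples s)"
    using s by (rule subgyrogroup_G_multiples)
  have "2 ^ s \<le> m"
    using pow_dvd_m[OF s] m_pos by (simp add: dvd_imp_le)
  then show "{2 ^ s, m} \<subseteq> G_multiples s"
    using pow_dvd_m[OF s] m_pos by (simp add: G_multiples_def)
  show "G_multiples s \<subseteq> H" if "subgyrogroup n H" "{2 ^ s, m} \<subseteq> H" for H
    using G2_closed_subset.G_multiples_subset[OF subgyrogroup_imp_closed[OF that(1)] s] that(2) by simp
qed

section \<open>Classification\<close>

context G2_closed_subset
begin

lemma least_low_dvd:
  assumes d: "d \<in> H" "0 < d" "d < m"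
    and least: "\<And>x. x \<in> H \<Longrightarrow> 0 < x \<Longrightarrow> x < m \<Longrightarrow> d \<le> x"
  shows least_low_dvd_m: "d dvd m" and least_low_dvd_mem: "t \<in> H \<Longrightarrow> t < m \<Longrightarrow> d dvd t"
proof -
  have gcd_le: "gcd d u \<le> d" for u
    using d(2) by (simp add: gcd_le1_nat)
  have dvd_if_gcd_mem: "d dvd u" if "gcd d u \<in> H" for u
  proof -
    have "0 < gcd d u"
      using d(2) by simp
    then have "gcd d u = d"
      using least[OF that] gcd_le[of u] d(3) by linarith
    then show ?thesis
      by (metis gcd_dvd2)
  qed
  obtain x y where "d * x = m * y + gcd d m"
    using bezout_nat[of d m] d(2) by blast
  then have "(x * d) mod m = gcd d m"
    using gcd_le[of m] d(3) by (simp add: mult.commute)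
  then show "d dvd m"
    using low_mult_mem[OF d(1,3), of x] dvd_if_gcd_mem by simp
  assume t: "t \<in> H" "t < m"
  obtain x y where bezout: "d * x = t * y + gcd d t"
    using bezout_nat[of d t] d(2) by blast
  \<comment> \<open>\<open>(m - 1) * y * t\<close> stands for \<open>- y * t\<close> in \<open>Z_m\<close>, so the sum realises \<open>d * x - t * y\<close>\<close>
  have "(x * d) mod m \<oplus> ((m - 1) * y * t) mod m = (x * d + (m - 1) * y * t) mod m"
    using m_pos by (simp add: goplus_low mod_add_eq)
  also have "x * d + (m - 1) * y * t = gcd d t + m * (y * t)"
    using bezout m_pos by (cases m) (simp_all add: algebra_simps)
  also have "(gcd d t + m * (y * t)) mod m = gcd d t"
    using gcd_le[of t] d(3) by simp
  finally have "gcd d t \<in> H"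
    using goplus_closed low_mult_mem[OF d(1,3)] low_mult_mem[OF t] by (metis mult.assoc)
  then show "d dvd t"
    by (rule dvd_if_gcd_mem)
qed

lemma low_part_eq_P_multiples:
  assumes "g \<in> H"
  obtains r where "r \<le> n - 1" "H \<inter> {..<m} = P_multiples r"
proof (cases "\<exists>x \<in> H. 0 < x \<and> x < m")
  case False
  then have "H \<inter> {..<m} = {0}"
    using zero_mem[OF assms] m_pos by auto
  moreover have "P_multiples (n - 1) = {0}"
  proof -
    have "x = 0" if "x < m" "m dvd x" for x
      using that by (metis dvd_imp_le not_less neq0_conv)
    then show ?thesis
      using m_pos by (auto simp: P_multiples_def mm_def)
  qed
  ultimately show ?thesis
    by (intro that[of "n - 1"]) simp_all
next
  case True
  define d where "d = (LEAST x. x \<in> H \<and> 0 < x \<and> x < m)"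
  obtain x0 where "x0 \<in> H \<and> 0 < x0 \<and> x0 < m"
    using True by blast
  then have d: "d \<in> H" "0 < d" "d < m"
    unfolding d_def by (metis (mono_tags, lifting) LeastI)+
  have least: "d \<le> x" if "x \<in> H" "0 < x" "x < m" for x
    unfolding d_def using that by (simp add: Least_le)
  have "d dvd 2 ^ (n - 1)"
    using least_low_dvd_m[OF d least] by (simp add: mm_def)
  then obtain r where r: "r \<le> n - 1" "d = 2 ^ r"
    using divides_primepow_nat[OF two_is_prime_nat] by blast
  have "H \<inter> {..<m} = P_multiples r"
  proof
    show "H \<inter> {..<m} \<subseteq> P_multiples r"
      using least_low_dvd_mem[OF d least] r(2) by (auto simp: P_multiples_def)
    show "P_multiples r \<subseteq> H \<inter> {..<m}"
      using P_multiples_subset[OF r(1)] d(1) r(2) by (auto simp: P_multiples_def)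
  qed
  with r(1) show ?thesis
    by (rule that)
qed

lemma mem_low_iff:
  assumes "H \<inter> {..<m} = P_multiples r" "x < m"
  shows "x \<in> H \<longleftrightarrow> 2 ^ r dvd x"
  using assms unfolding P_multiples_def by blast

lemma eq_G_multiples_if_m_mem:
  assumes low: "H \<inter> {..<m} = P_multiples r" and r: "r \<le> n - 1" and m_mem: "m \<in> H"
  shows "H = G_multiples r"
proof (intro equalityI subsetI)
  note low_iff = mem_low_iff[OF low]
  fix x assume x: "x \<in> H"
  have "2 ^ r dvd x"
  proof (cases "m \<le> x")
    case True
    then have "x - m \<in> H"
      using goplus_closed[OF x m_mem] goplus_high_m mem_less[OF x] by simp
    then have "2 ^ r dvd x - m"
      using low_iff mem_less[OF x] by simp
    then have "2 ^ r dvd x - m + m"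
      using pow_dvd_m[OF r] by simp
    then show ?thesis
      using True by simp
  qed (use low_iff x in simp)
  then show "x \<in> G_multiples r"
    using mem_less[OF x] by (simp add: G_multiples_def)
next
  fix x assume x: "x \<in> G_multiples r"
  have P_sub: "P_multiples r \<subseteq> H"
    using low by blast
  show "x \<in> H"
  proof (cases "m \<le> x")
    case True
    then show ?thesis
      using x pow_dvd_m[OF r] by (intro high_mem_if_mod_eq[OF P_sub r m_mem order_refl True])
        (simp_all add: G_multiples_def)
  qed (use x P_sub in \<open>auto simp: G_multiples_def P_multiples_def\<close>)
qed

lemma high_mod_pow_eq:
  assumes low: "H \<inter> {..<m} = P_multiples r" and r: "r \<le> n - 1" and m_not_mem: "m \<notin> H"
    and h: "h \<in> H" "m \<le> h"
  obtains s where "r = Suc s" "h mod 2 ^ Suc s = 2 ^ s"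
proof -
  have dvd_m: "2 ^ r dvd m"
    using r by (rule pow_dvd_m)
  note low_iff = mem_low_iff[OF low]
  have P_sub: "P_multiples r \<subseteq> H"
    using low by blast
  have not_dvd: "\<not> 2 ^ r dvd h"
  proof
    assume "2 ^ r dvd h"
    then have "m mod 2 ^ r = h mod 2 ^ r"
      using dvd_m by simp
    then have "m \<in> H"
      using m_pos by (intro high_mem_if_mod_eq[OF P_sub r h order_refl]) simp_all
    with m_not_mem show False ..
  qed
  have "(h + h) mod m \<in> H"
    using goplus_closed[OF h(1) h(1)] goplus_high_self[OF h(2) mem_less[OF h(1)]] by simp
  then have "2 ^ r dvd (h + h) mod m"
    using low_iff m_pos by simp
  then have "2 ^ r dvd 2 * h"
    using dvd_m by (simp add: dvd_mod_iff mult_2)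
  moreover have "r \<noteq> 0"
    using not_dvd by (metis one_dvd power_0)
  then obtain s where s: "r = Suc s"
    using not0_implies_Suc by blast
  ultimately have "2 ^ s dvd h"
    by simp
  with not_dvd s have "h mod 2 ^ Suc s = 2 ^ s"
    by (intro mod_pow_Suc_eq) simp_all
  with s show ?thesis
    by (rule that)
qed

lemma eq_G_shifted_if_m_not_mem:
  assumes low: "H \<inter> {..<m} = P_multiples r" and r: "r \<le> n - 1" and m_not_mem: "m \<notin> H"
    and h: "h \<in> H" "m \<le> h"
  obtains s where "s \<le> n - 2" "H = G_shifted s"
proof -
  obtain s where s: "r = Suc s" "h mod 2 ^ Suc s = 2 ^ s"
    using high_mod_pow_eq[OF low r m_not_mem h] .
  have low_iff: "x \<in> H \<longleftrightarrow> x mod 2 ^ Suc s = 0" if "x < m" for x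
    using mem_low_iff[OF low that] s(1) by (simp add: dvd_eq_mod_eq_0)
  have P_sub: "P_multiples r \<subseteq> H"
    using low by blast
  have "s \<le> n - 2"
    using r s(1) by simp
  moreover have "H = G_shifted s"
  proof (intro equalityI subsetI)
    fix x assume x: "x \<in> H"
    have "x mod 2 ^ Suc s = 2 ^ s * of_bool (m \<le> x)"
    proof (cases "m \<le> x")
      case True
      obtain s' where "r = Suc s'" "x mod 2 ^ Suc s' = 2 ^ s'"
        by (rule high_mod_pow_eq[OF low r m_not_mem x True])
      with s(1) True show ?thesis
        by simp
    qed (use x low_iff in simp)
    then show "x \<in> G_shifted s"
      using mem_less[OF x] by (simp add: G_shifted_def)
  next
    fix x assume x: "x \<in> G_shifted s"
    show "x \<in> H"
    proof (cases "m \<le> x")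
      case True
      then have "x mod 2 ^ r = h mod 2 ^ r"
        using x s by (simp add: G_shifted_def)
      then show ?thesis
        using x True by (intro high_mem_if_mod_eq[OF P_sub r h True]) (simp_all add: G_shifted_def)
    qed (use x low_iff in \<open>simp add: G_shifted_def\<close>)
  qed
  ultimately show ?thesis
    by (rule that)
qed

lemma classification:
  assumes "H \<noteq> {}"
  shows "(\<exists>s \<le> n - 1. H = P_multiples s) \<or> (\<exists>s \<le> n - 1. H = G_multiples s)
    \<or> (\<exists>s \<le> n - 2. H = G_shifted s)"
proof -
  obtain g where "g \<in> H"
    using assms by blast
  then obtain r where r: "r \<le> n - 1" and low: "H \<inter> {..<m} = P_multiples r"
    by (rule low_part_eq_P_multiples)
  consider "H \<subseteq> {..<m}" | "m \<in> H" | h where "h \<in> H" "m \<le> h" "m \<notin> H"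
    using not_less by auto
  then show ?thesis
  proof cases
    case 1
    then have "H = P_multiples r"
      using low by blast
    then show ?thesis
      using r by blast
  next
    case 2
    then show ?thesis
      using eq_G_multiples_if_m_mem[OF low r] r by blast
  next
    case 3
    then show ?thesis
      using eq_G_shifted_if_m_not_mem[OF low r] by metis
  qed
qed

end

theorem (in G2_gyrogroup) subgyrogroup_iff:
  "subgyrogroup n H \<longleftrightarrow> (\<exists>s \<le> n - 1. H = P_multiples s) \<or> (\<exists>s \<le> n - 1. H = G_multiples s)
    \<or> (\<exists>s \<le> n - 2. H = G_shifted s)"
proof
  assume "subgyrogroup n H"
  then show "(\<exists>s \<le> n - 1. H = P_multiples s) \<or> (\<exists>s \<le> n - 1. H = G_multiples s)
    \<or> (\<exists>s \<le> n - 2. H = G_shifted s)"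
    using G2_closed_subset.classification[OF subgyrogroup_imp_closed] by (simp add: subgyrogroup_def)
next
  assume "(\<exists>s \<le> n - 1. H = P_multiples s) \<or> (\<exists>s \<le> n - 1. H = G_multiples s)
    \<or> (\<exists>s \<le> n - 2. H = G_shifted s)"
  then show "subgyrogroup n H"
    using subgroup_P_multiples subgyrogroup_G_multiples subgroup_G_shifted
    by (auto simp: subgroup_G2_def)
qed

theorem mainTheorem4:
  fixes n :: nat
  assumes "n \<ge> 3"
  shows "(\<forall>H. H \<subseteq> G2 n \<longrightarrow>
            (subgyrogroup n H \<longleftrightarrow>
              (\<exists>s. s \<le> n - 1 \<and> H = cycP n s) \<or>
              (\<exists>s. s \<le> n - 1 \<and> H = gen n {2 ^ s, mm n}) \<or>
              (\<exists>s. s \<le> n - 2 \<and> H = gen n {mm n + 2 ^ s})))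
       \<and> (\<forall>s. s \<le> n - 1 \<longrightarrow> (subgroup_G2 n (gen n {2 ^ s, mm n}) \<longleftrightarrow> s \<noteq> 0))
       \<and> gen n {1, mm n} = G2 n
       \<and> (\<forall>s. s \<le> n - 2 \<longrightarrow> subgroup_G2 n (gen n {mm n + 2 ^ s}))"
proof -
  interpret G2_gyrogroup n
    using assms by unfold_locales
  have "(\<exists>s. s \<le> n - 1 \<and> H = cycP n s) \<longleftrightarrow> (\<exists>s \<le> n - 1. H = P_multiples s)"
    and "(\<exists>s. s \<le> n - 1 \<and> H = gen n {2 ^ s, mm n}) \<longleftrightarrow> (\<exists>s \<le> n - 1. H = G_multiples s)"
    and "(\<exists>s. s \<le> n - 2 \<and> H = gen n {mm n + 2 ^ s}) \<longleftrightarrow> (\<exists>s \<le> n - 2. H = G_shifted s)" for H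
    using cycP_eq_P_multiples gen_G_multiples gen_G_shifted by auto
  moreover have "subgroup_G2 n (G_multiples s) \<longleftrightarrow> s \<noteq> 0" if "s \<le> n - 1" for s
    using subgroup_G_multiples[OF _ that] G_multiples_0 not_subgroup_G2 by (cases "s = 0") auto
  moreover have "gen n {1, mm n} = G2 n"
    using gen_G_multiples[of 0] G_multiples_0 by simp
  ultimately show ?thesis
    using subgyrogroup_iff gen_G_multiples gen_G_shifted subgroup_G_shifted by simp
qed

end
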